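(* Let $\mathcal Z$ be a finite zero-set, $k\ge0$ an integer, and $A\subseteq\mathbb Z_+^2$. If $A$ spans for $\mathcal Z$, then $A_{>k}$ spans for $\mathcal Z^{\swarrow k}$.
   Context: $\mathbb Z_+=\{0,1,2,\dots\}$; a zero-set is a union of rectangles $([0,a-1]\times[0,b-1])\cap\mathbb Z_+^2$. $\mathrm{row}(x,A)$ (resp. $\mathrm{col}(x,A)$) is the number of points of $A$ on the horizontal (resp. vertical) line through $x$; $\mathcal T(A)=A\cup\{x\notin A:(\mathrm{row}(x,A),\mathrm{col}(x,A))\notin\mathcal Z\}$; $A$ spans for $\mathcal Z$ if $\bigcup_t\mathcal T^t(A)=\mathbb Z_+^2$. $A_{>k}=\{x\in A:\mathrm{row}(x,A)>k\text{ or }\mathrm{col}(x,A)>k\}$. $\mathcal Z^{\swarrow k}=\{(u-k,v-k):(u,v)\in\mathcal Z,u\ge k,v\ge k\}$. *)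

theory Defs
  imports Main "HOL-Library.Extended_Nat"
begin

type_synonym pt = "nat \<times> nat"

definition rect :: "nat \<Rightarrow> nat \<Rightarrow> pt set" where
  "rect a b = {..<a} \<times> {..<b}"

definition zero_set :: "pt set \<Rightarrow> bool" where
  "zero_set Z \<longleftrightarrow> (\<exists>R :: pt set. Z = (\<Union>(a,b)\<in>R. rect a b))"

definition ecard :: "'a set \<Rightarrow> enat" where
  "ecard S = (if finite S then enat (card S) else \<infinity>)"

definition row :: "pt \<Rightarrow> pt set \<Rightarrow> enat" where
  "row x A = ecard {y \<in> A. snd y = snd x}"

definition col :: "pt \<Rightarrow> pt set \<Rightarrow> enat" where
  "col x A = ecard {y \<in> A. fst y = fst x}"

definition in_Z :: "enat \<Rightarrow> enat \<Rightarrow> pt set \<Rightarrow> bool" where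
  "in_Z r c Z \<longleftrightarrow> (\<exists>(u,v)\<in>Z. r = enat u \<and> c = enat v)"

definition T :: "pt set \<Rightarrow> pt set \<Rightarrow> pt set" where
  "T Z A = A \<union> {x. x \<notin> A \<and> \<not> in_Z (row x A) (col x A) Z}"

definition spans :: "pt set \<Rightarrow> pt set \<Rightarrow> bool" where
  "spans Z A \<longleftrightarrow> (\<Union>t. (T Z ^^ t) A) = UNIV"

definition A_gt :: "nat \<Rightarrow> pt set \<Rightarrow> pt set" where
  "A_gt k A = {x \<in> A. row x A > enat k \<or> col x A > enat k}"

definition shift :: "pt set \<Rightarrow> nat \<Rightarrow> pt set" where
  "shift Z k = {(u - k, v - k) | u v. (u, v) \<in> Z \<and> u \<ge> k \<and> v \<ge> k}"

end

theory Submission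
  imports Defs
begin

text \<open>Let B be the closure of A_{>k} under the shifted rule. By induction along the spanning
process, every infected point lies in B or in A - A_{>k}. A line meeting A - A_{>k} carries at
most k points of A, so a point seeing counts (r, c) \<notin> Z in the process sees at least
(r - k, c - k) in B. Since Z is a finite down-set, it suffices to see these counts truncated at a
bound of Z, which finitely many shifted steps already achieve; hence (r - k, c - k) escapes the
shifted zero-set and the point joins B. Applied to the whole plane, where every line is infinite,
this shows that B is everything.\<close>

lemma zero_set_downward_closed:
  assumes "zero_set Z" "(u, v) \<in> Z" "u' \<le> u" "v' \<le> v"
  shows "(u', v') \<in> Z"
  using assms unfolding zero_set_def rect_def by fastforce

lemma not_in_Z_mono_truncated:
  assumes "zero_set Z" "\<forall>(u, v)\<in>Z. u < N \<and> v < N" "\<not> in_Z r c Z"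
    and "min r (enat N) \<le> r'" "min c (enat N) \<le> c'"
  shows "\<not> in_Z r' c' Z"
proof
  assume "in_Z r' c' Z"
  then obtain u v where uv: "(u, v) \<in> Z" "r' = enat u" "c' = enat v"
    unfolding in_Z_def by auto
  with assms(2) have "u < N" "v < N" by auto
  with assms(4,5) uv obtain a b where "r = enat a" "a \<le> u" "c = enat b" "b \<le> v"
    by (cases r; cases c) (auto simp: min_def split: if_splits)
  with zero_set_downward_closed[OF assms(1) uv(1)] assms(3) show False
    unfolding in_Z_def by auto
qed

lemma in_Z_shift:
  assumes "in_Z r c (shift Z k)"
  shows "in_Z (r + enat k) (c + enat k) Z"
  using assms unfolding in_Z_def shift_def by force

lemma ecard_mono: "X \<subseteq> Y \<Longrightarrow> ecard X \<le> ecard Y"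
  unfolding ecard_def by (auto intro: card_mono dest: finite_subset)

lemma ecard_Un_le: "ecard (X \<union> Y) \<le> ecard X + ecard Y"
  unfolding ecard_def by (auto simp: card_Un_le)

lemma finite_subset_incseq:
  fixes B :: "nat \<Rightarrow> 'a set"
  assumes "incseq B" "finite F" "F \<subseteq> (\<Union>s. B s)"
  shows "\<exists>s. F \<subseteq> B s"
  using assms(2,3)
proof (induction rule: finite_induct)
  case (insert x F)
  then obtain s s' where "F \<subseteq> B s" "x \<in> B s'" by auto
  then have "insert x F \<subseteq> B (max s s')"
    using monoD[OF assms(1), of s "max s s'"] monoD[OF assms(1), of s' "max s s'"] by auto
  then show ?case by blast
qed simp

lemma ecard_incseq_truncated:
  fixes B :: "nat \<Rightarrow> 'a set"
  assumes "incseq B"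
  shows "\<exists>s. min (ecard (\<Union>s. B s)) (enat N) \<le> ecard (B s)"
proof -
  obtain F where F: "F \<subseteq> (\<Union>s. B s)" "finite F" "min (ecard (\<Union>s. B s)) (enat N) \<le> enat (card F)"
  proof (cases "finite (\<Union>s. B s)")
    case True
    then show ?thesis using that[of "\<Union>s. B s"] by (auto simp: ecard_def)
  next
    case False
    then obtain F where "F \<subseteq> (\<Union>s. B s)" "finite F" "card F = N"
      using infinite_arbitrarily_large by blast
    then show ?thesis using that[of F] by auto
  qed
  obtain s where "F \<subseteq> B s"
    using finite_subset_incseq[OF assms F(2,1)] by blast
  then have "enat (card F) \<le> ecard (B s)"
    using ecard_mono[of F "B s"] F(2) by (simp add: ecard_def)
  with F(3) show ?thesis by (blast intro: order_trans)
qed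

lemma row_mono: "X \<subseteq> Y \<Longrightarrow> row x X \<le> row x Y"
  and col_mono: "X \<subseteq> Y \<Longrightarrow> col x X \<le> col x Y"
  unfolding row_def col_def by (auto intro: ecard_mono)

lemma row_Un_le: "row x (X \<union> Y) \<le> row x X + row x Y"
proof -
  have "{y \<in> X \<union> Y. snd y = snd x} = {y \<in> X. snd y = snd x} \<union> {y \<in> Y. snd y = snd x}"
    by auto
  then show ?thesis unfolding row_def by (simp only: ecard_Un_le)
qed

lemma col_Un_le: "col x (X \<union> Y) \<le> col x X + col x Y"
proof -
  have "{y \<in> X \<union> Y. fst y = fst x} = {y \<in> X. fst y = fst x} \<union> {y \<in> Y. fst y = fst x}"
    by auto
  then show ?thesis unfolding col_def by (simp only: ecard_Un_le)
qed

lemma row_UNIV: "row x UNIV = \<infinity>"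
proof -
  have "fst ` {y :: pt. snd y = snd x} = UNIV"
    by (auto simp: image_iff)
  then have "infinite {y :: pt. snd y = snd x}"
    by (metis finite_imageI infinite_UNIV_nat)
  then show ?thesis unfolding row_def ecard_def by simp
qed

lemma row_light_le: "row x (A - A_gt k A) \<le> enat k"
proof (cases "\<exists>y \<in> A - A_gt k A. snd y = snd x")
  case True
  then obtain y where "y \<in> A - A_gt k A" "snd y = snd x" by blast
  then have "row x A \<le> enat k"
    unfolding A_gt_def row_def by (auto simp: not_less)
  then show ?thesis using row_mono[of "A - A_gt k A" A x] by auto
next
  case False
  then have empty: "{y \<in> A - A_gt k A. snd y = snd x} = {}" by blast
  show ?thesis unfolding row_def empty by (simp add: ecard_def zero_enat_def[symmetric])
qed

lemma col_light_le: "col x (A - A_gt k A) \<le> enat k"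
proof (cases "\<exists>y \<in> A - A_gt k A. fst y = fst x")
  case True
  then obtain y where "y \<in> A - A_gt k A" "fst y = fst x" by blast
  then have "col x A \<le> enat k"
    unfolding A_gt_def col_def by (auto simp: not_less)
  then show ?thesis using col_mono[of "A - A_gt k A" A x] by auto
next
  case False
  then have empty: "{y \<in> A - A_gt k A. fst y = fst x} = {}" by blast
  show ?thesis unfolding col_def empty by (simp add: ecard_def zero_enat_def[symmetric])
qed

lemma incseq_T_funpow: "incseq (\<lambda>s. (T Z ^^ s) X)"
  by (rule incseq_SucI) (auto simp: T_def)

lemma row_col_incseq_truncated:
  assumes "incseq B"
  shows "\<exists>s. min (row x (\<Union>s. B s)) (enat N) \<le> row x (B s)
           \<and> min (col x (\<Union>s. B s)) (enat N) \<le> col x (B s)"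
proof -
  have "incseq (\<lambda>s. {y \<in> B s. snd y = snd x})" "incseq (\<lambda>s. {y \<in> B s. fst y = fst x})"
    using assms by (auto simp: incseq_def)
  moreover have "(\<Union>s. {y \<in> B s. snd y = snd x}) = {y \<in> (\<Union>s. B s). snd y = snd x}"
    "(\<Union>s. {y \<in> B s. fst y = fst x}) = {y \<in> (\<Union>s. B s). fst y = fst x}"
    by auto
  ultimately obtain s1 s2 where
    "min (row x (\<Union>s. B s)) (enat N) \<le> row x (B s1)"
    "min (col x (\<Union>s. B s)) (enat N) \<le> col x (B s2)"
    unfolding row_def col_def
    using ecard_incseq_truncated[of "\<lambda>s. {y \<in> B s. snd y = snd x}" N]
      ecard_incseq_truncated[of "\<lambda>s. {y \<in> B s. fst y = fst x}" N]
    by auto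
  moreover have "B s1 \<subseteq> B (max s1 s2)" "B s2 \<subseteq> B (max s1 s2)"
    using assms by (auto simp: incseq_def)
  ultimately show ?thesis
    by (meson order_trans row_mono col_mono)
qed

lemma enat_min_le_add:
  fixes a b c :: enat
  assumes "a \<le> b + enat k" "min b (enat N) \<le> c"
  shows "min a (enat N) \<le> c + enat k"
proof -
  have "min a (enat N) \<le> min (b + enat k) (enat N)"
    using assms(1) by (rule min.mono) simp
  also have "\<dots> \<le> min b (enat N) + enat k"
    by (cases b) (auto simp: min_def)
  also have "\<dots> \<le> c + enat k"
    using assms(2) by (rule add_right_mono)
  finally show ?thesis .
qed

definition span_closure :: "pt set \<Rightarrow> pt set \<Rightarrow> pt set" where
  "span_closure Z A = (\<Union>t. (T Z ^^ t) A)"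

lemma spans_iff_span_closure: "spans Z A \<longleftrightarrow> span_closure Z A = UNIV"
  unfolding spans_def span_closure_def ..

lemma T_funpow_subset_span_closure: "T Z ((T Z ^^ t) A) \<subseteq> span_closure Z A"
  unfolding span_closure_def by (metis UNIV_I UN_upper funpow.simps(2) o_apply)

lemma mem_shifted_span_closure:
  assumes "zero_set Z" "finite Z"
    and cover: "X \<subseteq> span_closure (shift Z k) (A_gt k A) \<union> (A - A_gt k A)"
    and "\<not> in_Z (row x X) (col x X) Z"
  shows "x \<in> span_closure (shift Z k) (A_gt k A)"
proof -
  define B where "B s = (T (shift Z k) ^^ s) (A_gt k A)" for s
  have "finite (fst ` Z \<union> snd ` Z)"
    using \<open>finite Z\<close> by simp
  then obtain N where "\<forall>n \<in> fst ` Z \<union> snd ` Z. n < N"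
    by (auto simp: finite_nat_set_iff_bounded)
  then have N: "\<forall>(u, v)\<in>Z. u < N \<and> v < N"
    by force
  obtain s where s: "min (row x (\<Union>s. B s)) (enat N) \<le> row x (B s)"
      "min (col x (\<Union>s. B s)) (enat N) \<le> col x (B s)"
    using row_col_incseq_truncated[OF incseq_T_funpow] unfolding B_def by blast
  have span_closure_eq: "span_closure (shift Z k) (A_gt k A) = (\<Union>s. B s)"
    unfolding B_def span_closure_def ..
  have "row x X \<le> row x (\<Union>s. B s) + row x (A - A_gt k A)"
    using row_mono[OF cover] row_Un_le unfolding span_closure_eq by (rule order_trans)
  also have "\<dots> \<le> row x (\<Union>s. B s) + enat k"
    using row_light_le by (rule add_left_mono)
  finally have row: "row x X \<le> row x (\<Union>s. B s) + enat k" .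
  have "col x X \<le> col x (\<Union>s. B s) + col x (A - A_gt k A)"
    using col_mono[OF cover] col_Un_le unfolding span_closure_eq by (rule order_trans)
  also have "\<dots> \<le> col x (\<Union>s. B s) + enat k"
    using col_light_le by (rule add_left_mono)
  finally have col: "col x X \<le> col x (\<Union>s. B s) + enat k" .
  have "\<not> in_Z (row x (B s) + enat k) (col x (B s) + enat k) Z"
    using not_in_Z_mono_truncated[OF \<open>zero_set Z\<close> N \<open>\<not> in_Z _ _ Z\<close>]
      enat_min_le_add[OF row s(1)] enat_min_le_add[OF col s(2)] .
  then have "\<not> in_Z (row x (B s)) (col x (B s)) (shift Z k)"
    by (auto dest: in_Z_shift)
  then have "x \<in> T (shift Z k) (B s)"
    unfolding T_def by simp
  then show ?thesis
    using T_funpow_subset_span_closure unfolding B_def by blast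
qed

lemma row_col_UNIV_not_in_Z: "\<not> in_Z (row x UNIV) (col x UNIV) Z"
  by (simp add: row_UNIV in_Z_def)

lemma subset_span_closure: "A \<subseteq> span_closure Z A"
  unfolding span_closure_def by (metis UNIV_I UN_upper funpow_0)

lemma T_funpow_subset_shifted_span_closure:
  assumes "zero_set Z" "finite Z"
  shows "(T Z ^^ t) A \<subseteq> span_closure (shift Z k) (A_gt k A) \<union> (A - A_gt k A)"
proof (induction t)
  case 0
  show ?case
    using subset_span_closure[of "A_gt k A"] by auto
next
  case (Suc t)
  show ?case
  proof
    fix y
    assume "y \<in> (T Z ^^ Suc t) A"
    then have "y \<in> T Z ((T Z ^^ t) A)"
      by simp
    then consider "y \<in> (T Z ^^ t) A" | "\<not> in_Z (row y ((T Z ^^ t) A)) (col y ((T Z ^^ t) A)) Z"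
      unfolding T_def by blast
    then show "y \<in> span_closure (shift Z k) (A_gt k A) \<union> (A - A_gt k A)"
    proof cases
      case 2
      then have "y \<in> span_closure (shift Z k) (A_gt k A)"
        by (rule mem_shifted_span_closure[OF assms Suc])
      then show ?thesis ..
    qed (use Suc in blast)
  qed
qed

theorem mainTheorem12:
  fixes Z A :: "(nat \<times> nat) set" and k :: nat
  assumes "zero_set Z" and "finite Z"
    and "spans Z A"
  shows "spans (shift Z k) (A_gt k A)"
proof -
  let ?B = "span_closure (shift Z k) (A_gt k A)"
  have "UNIV = span_closure Z A"
    using assms(3) by (simp add: spans_iff_span_closure)
  also have "\<dots> \<subseteq> ?B \<union> (A - A_gt k A)"
    unfolding span_closure_def[of Z A]
    using T_funpow_subset_shifted_span_closure[OF assms(1,2)] by (rule UN_least)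
  finally have "UNIV \<subseteq> ?B \<union> (A - A_gt k A)" .
  then have "x \<in> ?B" for x
    by (rule mem_shifted_span_closure[OF assms(1,2) _ row_col_UNIV_not_in_Z])
  then show ?thesis
    unfolding spans_iff_span_closure by auto
qed

end
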